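(* Fix $\beta>0$ and an MDP with a sink state as in the context. For each $t\in\mathbb N$, each stationary policy $\pi=(\bm d)_\infty\in\Pi_{\mathrm{SR}}$ and each probability vector $\bm\eta\in\Delta^S$: \[ \bm\eta^\top(\bm B^{\bm d})^t\bm b^{\bm d}=0\quad\Longleftrightarrow\quad\bm\eta^\top(\bm P^{\bm d})^t\bm p^{\bm d}=0. \]
   Context: MDP: states $\mathcal S=\{1,\dots,S\}$ plus sink state $e$; finite actions; transitions $p(s,a,s')$, real rewards $r(s,a,s')$. $\Pi_{\mathrm{SR}}$: stationary randomized policies $(\bm d)_\infty$, $d_a(s)$ the probability of action $a$ in $s$. $B^{\bm d}_{s,s'}=\sum_a p(s,a,s')d_a(s)e^{-\beta r(s,a,s')}$, $b^{\bm d}_s=\sum_a p(s,a,e)d_a(s)e^{-\beta r(s,a,e)}$, $P^{\bm d}_{s,s'}=\sum_a d_a(s)p(s,a,s')$, $p^{\bm d}_s=\sum_a d_a(s)p(s,a,e)$ for $s,s'\in\mathcal S$. $\Delta^S$ is the probability simplex in $\mathbb R^S$. *)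

theory Defs
  imports "HOL-Analysis.Analysis"
begin

text \<open>States: the finite type 's stands for {1..S}; the sink state e is None in 's option.\<close>

primrec matpow :: "real^'n^'n \<Rightarrow> nat \<Rightarrow> real^'n^'n" where
  "matpow A 0 = mat 1"
| "matpow A (Suc k) = A ** matpow A k"

definition Bmat :: "real \<Rightarrow> ('s::finite \<Rightarrow> 'a::finite \<Rightarrow> 's option \<Rightarrow> real)
   \<Rightarrow> ('s \<Rightarrow> 'a \<Rightarrow> 's option \<Rightarrow> real) \<Rightarrow> ('s \<Rightarrow> 'a \<Rightarrow> real) \<Rightarrow> real^'s^'s" where
  "Bmat \<beta> p r d = (\<chi> s s'. \<Sum>a\<in>UNIV. p s a (Some s') * d s a * exp (- \<beta> * r s a (Some s')))"

definition bvec :: "real \<Rightarrow> ('s::finite \<Rightarrow> 'a::finite \<Rightarrow> 's option \<Rightarrow> real)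
   \<Rightarrow> ('s \<Rightarrow> 'a \<Rightarrow> 's option \<Rightarrow> real) \<Rightarrow> ('s \<Rightarrow> 'a \<Rightarrow> real) \<Rightarrow> real^'s" where
  "bvec \<beta> p r d = (\<chi> s. \<Sum>a\<in>UNIV. p s a None * d s a * exp (- \<beta> * r s a None))"

definition Pmat :: "('s::finite \<Rightarrow> 'a::finite \<Rightarrow> 's option \<Rightarrow> real)
   \<Rightarrow> ('s \<Rightarrow> 'a \<Rightarrow> real) \<Rightarrow> real^'s^'s" where
  "Pmat p d = (\<chi> s s'. \<Sum>a\<in>UNIV. d s a * p s a (Some s'))"

definition pvec :: "('s::finite \<Rightarrow> 'a::finite \<Rightarrow> 's option \<Rightarrow> real)
   \<Rightarrow> ('s \<Rightarrow> 'a \<Rightarrow> real) \<Rightarrow> real^'s" where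
  "pvec p d = (\<chi> s. \<Sum>a\<in>UNIV. d s a * p s a None)"

end

theory Submission
  imports Defs
begin

text \<open>Each entry of \<open>B\<^sup>d\<close> and \<open>b\<^sup>d\<close> is a sum of the nonnegative terms
  \<open>p d exp(-\<beta> r)\<close>, which vanish exactly when the matching terms \<open>d p\<close> of \<open>P\<^sup>d\<close> and
  \<open>p\<^sup>d\<close> vanish, because \<open>exp\<close> is positive. For nonnegative matrices and vectors the
  zero pattern of a product depends only on the zero patterns of the factors, so
  \<open>(B\<^sup>d)\<^sup>t b\<^sup>d\<close> and \<open>(P\<^sup>d)\<^sup>t p\<^sup>d\<close> have the same zero pattern, and pairing with
  \<open>\<eta> \<ge> 0\<close> preserves this.\<close>

definition nonneg_same_zeros :: "real^'n \<Rightarrow> real^'n \<Rightarrow> bool" where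
  "nonneg_same_zeros x y \<longleftrightarrow> (\<forall>i. 0 \<le> x$i \<and> 0 \<le> y$i \<and> (x$i = 0 \<longleftrightarrow> y$i = 0))"

lemma sum_nonneg_eq_0_iff_same_zeros:
  fixes f g :: "'i \<Rightarrow> real"
  assumes "finite A"
    and "\<And>a. a \<in> A \<Longrightarrow> 0 \<le> f a" "\<And>a. a \<in> A \<Longrightarrow> 0 \<le> g a"
    and "\<And>a. a \<in> A \<Longrightarrow> f a = 0 \<longleftrightarrow> g a = 0"
  shows "sum f A = 0 \<longleftrightarrow> sum g A = 0"
  using assms by (simp add: sum_nonneg_eq_0_iff)

lemma inner_nonneg_eq_0_iff_same_zeros:
  fixes \<eta> x y :: "real^'n::finite"
  assumes "\<And>i. 0 \<le> \<eta>$i" and "nonneg_same_zeros x y"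
  shows "\<eta> \<bullet> x = 0 \<longleftrightarrow> \<eta> \<bullet> y = 0"
  unfolding inner_vec_def
  using assms unfolding nonneg_same_zeros_def
  by (intro sum_nonneg_eq_0_iff_same_zeros) auto

lemma nonneg_same_zeros_mult_vec:
  fixes A A' :: "real^'n::finite^'m"
  assumes "\<And>i. nonneg_same_zeros (A$i) (A'$i)" and "nonneg_same_zeros x y"
  shows "nonneg_same_zeros (A *v x) (A' *v y)"
  unfolding nonneg_same_zeros_def
proof (intro allI conjI)
  fix i
  have terms_nonneg: "\<And>j. 0 \<le> A$i$j * x$j" "\<And>j. 0 \<le> A'$i$j * y$j"
    using assms unfolding nonneg_same_zeros_def by auto
  then show "0 \<le> (A *v x)$i" "0 \<le> (A' *v y)$i"
    by (auto simp: matrix_vector_mult_def intro: sum_nonneg)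
  show "(A *v x)$i = 0 \<longleftrightarrow> (A' *v y)$i = 0"
    unfolding matrix_vector_mult_def vec_lambda_beta
    using terms_nonneg assms unfolding nonneg_same_zeros_def
    by (intro sum_nonneg_eq_0_iff_same_zeros) auto
qed

lemma nonneg_same_zeros_matpow_mult_vec:
  fixes A A' :: "real^'n::finite^'n"
  assumes "\<And>i. nonneg_same_zeros (A$i) (A'$i)" and "nonneg_same_zeros x y"
  shows "nonneg_same_zeros (matpow A t *v x) (matpow A' t *v y)"
proof (induction t)
  case 0
  then show ?case using assms(2) by simp
next
  case (Suc t)
  then show ?case
    using nonneg_same_zeros_mult_vec[OF assms(1)]
    by (simp add: matrix_vector_mul_assoc[symmetric])
qed

lemma nonneg_same_zeros_Bmat_Pmat:
  assumes "\<And>s a s'. 0 \<le> p s a s'" and "\<And>s a. 0 \<le> d s a"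
  shows "nonneg_same_zeros (Bmat \<beta> p r d $ s) (Pmat p d $ s)"
  unfolding nonneg_same_zeros_def Bmat_def Pmat_def vec_lambda_beta
  using assms by (intro allI conjI sum_nonneg sum_nonneg_eq_0_iff_same_zeros) auto

lemma nonneg_same_zeros_bvec_pvec:
  assumes "\<And>s a s'. 0 \<le> p s a s'" and "\<And>s a. 0 \<le> d s a"
  shows "nonneg_same_zeros (bvec \<beta> p r d) (pvec p d)"
  unfolding nonneg_same_zeros_def bvec_def pvec_def vec_lambda_beta
  using assms by (intro allI conjI sum_nonneg sum_nonneg_eq_0_iff_same_zeros) auto

theorem lemma8:
  fixes \<beta> :: real
    and p :: "'s::finite \<Rightarrow> 'a::finite \<Rightarrow> 's option \<Rightarrow> real"
    and r :: "'s \<Rightarrow> 'a \<Rightarrow> 's option \<Rightarrow> real"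
    and d :: "'s \<Rightarrow> 'a \<Rightarrow> real"
    and \<eta> :: "real^'s"
    and t :: nat
  assumes "\<beta> > 0"
    and "\<And>s a s'. p s a s' \<ge> 0"
    and "\<And>s a. (\<Sum>s'\<in>UNIV. p s a s') = 1"
    and "\<And>s a. d s a \<ge> 0"
    and "\<And>s. (\<Sum>a\<in>UNIV. d s a) = 1"
    and "\<And>s. \<eta> $ s \<ge> 0"
    and "(\<Sum>s\<in>UNIV. \<eta> $ s) = 1"
  shows "\<eta> \<bullet> (matpow (Bmat \<beta> p r d) t *v bvec \<beta> p r d) = 0
     \<longleftrightarrow> \<eta> \<bullet> (matpow (Pmat p d) t *v pvec p d) = 0"
proof (rule inner_nonneg_eq_0_iff_same_zeros)
  show "\<And>s. 0 \<le> \<eta>$s" by (fact assms(6))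
  show "nonneg_same_zeros (matpow (Bmat \<beta> p r d) t *v bvec \<beta> p r d)
                          (matpow (Pmat p d) t *v pvec p d)"
    using assms(2,4)
    by (intro nonneg_same_zeros_matpow_mult_vec nonneg_same_zeros_Bmat_Pmat
        nonneg_same_zeros_bvec_pvec)
qed

end
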